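(* For every integer $m\ge1$ and every $\beta\in\mathbb{R}$, with $F_m(i,\beta)$ denoting the value at $x=\frac12$ (i.e. $e^{i\pi x}=i$) of $$F_m(e^{i\pi x},\beta)=e^{m\pi ix}e^{-2\pi i\beta x}\frac{\sin^m\pi x}{\pi^{m-1}}\frac{d^{m-1}}{dx^{m-1}}\Big((i-\cot\pi x)e^{2\pi i\beta x}\Big),$$ one has $F_m(i,\beta)=2^{m-1}i^me^{m\pi i/2}E_{m-1}(\beta)$.
   Context: Bernoulli numbers: $B_0=1$, $B_n=-\frac1{n+1}\sum_{k=0}^{n-1}\binom{n+1}{k}B_k$. Euler polynomials: $E_n(x)=\frac{1}{n+1}\sum_{k=1}^{n+1}\binom{n+1}{k}(2-2^{k+1})B_kx^{n+1-k}$ (so $E_0=1$, $E_1(x)=x-\frac12$, $E_2(x)=x^2-x$). *)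

theory Defs
  imports "HOL-Analysis.Analysis"
begin

fun bernoulli_num :: "nat \<Rightarrow> real" where
  "bernoulli_num n =
     (if n = 0 then 1
      else - (1 / real (n + 1)) * (\<Sum>k<n. real ((n + 1) choose k) * bernoulli_num k))"

definition euler_poly :: "nat \<Rightarrow> real \<Rightarrow> real" where
  "euler_poly n x = (1 / real (n + 1)) *
     (\<Sum>k=1..n+1. real ((n + 1) choose k) * (2 - 2 ^ (k + 1)) * bernoulli_num k * x ^ (n + 1 - k))"

fun higher_vderiv :: "nat \<Rightarrow> (real \<Rightarrow> complex) \<Rightarrow> real \<Rightarrow> complex" where
  "higher_vderiv 0 f = f"
| "higher_vderiv (Suc n) f = (\<lambda>x. vector_derivative (higher_vderiv n f) (at x))"

definition F_fun :: "nat \<Rightarrow> real \<Rightarrow> real \<Rightarrow> complex" where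
  "F_fun m \<beta> x =
     exp (of_nat m * pi * \<i> * x) * exp (- 2 * pi * \<i> * \<beta> * x) *
     (complex_of_real (sin (pi * x)) ^ m / complex_of_real (pi ^ (m - 1))) *
     higher_vderiv (m - 1)
       (\<lambda>t. (\<i> - complex_of_real (cot (pi * t))) * exp (2 * pi * \<i> * \<beta> * t)) x"

end

theory Submission
  imports
    Defs
    "HOL-Computational_Algebra.Formal_Power_Series"
    "HOL-Complex_Analysis.Complex_Analysis"
begin

text \<open>
  For 0 < x < 1 one has i - cot(pi x) = 2i / (1 - e^(2 pi i x)), so the function being
  differentiated is the restriction to the real axis of the holomorphic function
  cot_exp beta z = 2i e^(2 pi i beta z) / (1 - e^(2 pi i z)), and its real derivatives are
  complex derivatives. Substituting z = 1/2 + t / (2 pi i) turns cot_exp beta into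
  i e^(pi i beta) 2 e^(beta t) / (e^t + 1), the exponential generating function of the Euler
  polynomials; hence the k-th derivative at 1/2 is i e^(pi i beta) (2 pi i)^k E_k(beta), and the
  prefactors e^(-pi i beta), sin^m(pi/2) = 1 and pi^(1-m) give the claim.
  Instead of summing power series, both sides are compared coefficientwise: Leibniz's rule for
  cot_exp beta z (1 - e^(2 pi i z)) = 2i e^(2 pi i beta z) and the formal identity
  E(X) (e^X + 1) = 2 e^(beta X) give the same triangular recurrence. That identity comes from
  the Bernoulli generating function, because the definition of E_n says
  X E(X) = 2 (B(X) - B(2X)) e^(beta X).
\<close>

declare bernoulli_num.simps [simp del]

lemma bernoulli_num_0 [simp]: "bernoulli_num 0 = 1"
  by (simp add: bernoulli_num.simps)

lemma bernoulli_num_recurrence: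
  assumes "n \<ge> 1"
  shows "(\<Sum>k\<le>n. real (Suc n choose k) * bernoulli_num k) = 0"
proof -
  have "bernoulli_num n = - (\<Sum>k<n. real (Suc n choose k) * bernoulli_num k) / real (Suc n)"
    using assms by (subst bernoulli_num.simps) simp
  then show ?thesis
    by (simp add: lessThan_Suc_atMost[symmetric] field_simps)
qed

definition bernoulli_fps :: "real \<Rightarrow> real fps" where
  "bernoulli_fps c = Abs_fps (\<lambda>n. c ^ n * bernoulli_num n / fact n)"

lemma bernoulli_fps_mult_exp: "bernoulli_fps c * (fps_exp c - 1) = fps_const c * fps_X"
proof (rule fps_ext)
  fix N
  show "fps_nth (bernoulli_fps c * (fps_exp c - 1)) N = fps_nth (fps_const c * fps_X) N"
  proof (cases N)
    case 0
    then show ?thesis by (simp add: bernoulli_fps_def)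
  next
    case (Suc n)
    have "fps_nth (bernoulli_fps c * (fps_exp c - 1)) N =
        (\<Sum>i\<le>n. c ^ i * bernoulli_num i / fact i * (c ^ (Suc n - i) / fact (Suc n - i)))"
      by (simp add: Suc fps_mult_nth atMost_atLeast0 bernoulli_fps_def) (simp only: mult.commute)
    also have "\<dots> = c ^ Suc n / fact (Suc n) * (\<Sum>i\<le>n. real (Suc n choose i) * bernoulli_num i)"
      unfolding sum_distrib_left
    proof (intro sum.cong refl)
      fix i assume "i \<in> {..n}"
      then have "i \<le> Suc n" "c ^ Suc n = c ^ i * c ^ (Suc n - i)"
        by (auto simp: power_add[symmetric])
      then show "c ^ i * bernoulli_num i / fact i * (c ^ (Suc n - i) / fact (Suc n - i)) =
          c ^ Suc n / fact (Suc n) * (real (Suc n choose i) * bernoulli_num i)"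
        by (simp add: binomial_fact del: fact_Suc)
    qed
    also have "\<dots> = fps_nth (fps_const c * fps_X) N"
      using bernoulli_num_recurrence[of n] by (cases n) (simp_all add: Suc)
    finally show ?thesis .
  qed
qed

definition euler_fps :: "real \<Rightarrow> real fps" where
  "euler_fps b = Abs_fps (\<lambda>n. euler_poly n b / fact n)"

lemma fps_X_mult_euler_fps:
  "fps_X * euler_fps b = fps_const 2 * (bernoulli_fps 1 - bernoulli_fps 2) * fps_exp b"
proof (rule fps_ext)
  fix N
  show "fps_nth (fps_X * euler_fps b) N =
      fps_nth (fps_const 2 * (bernoulli_fps 1 - bernoulli_fps 2) * fps_exp b) N"
  proof (cases N)
    case 0
    then show ?thesis by (simp add: bernoulli_fps_def fps_mult_nth)
  next
    case (Suc n)
    let ?term = "\<lambda>k. real (Suc n choose k) * (2 - 2 ^ (k + 1)) * bernoulli_num k * b ^ (Suc n - k)"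
    have "fps_nth (fps_const 2 * (bernoulli_fps 1 - bernoulli_fps 2) * fps_exp b) N =
        (\<Sum>k=0..Suc n. ?term k / fact (Suc n))"
      unfolding Suc fps_mult_nth[of "fps_const 2 * _"]
    proof (intro sum.cong refl)
      fix k assume "k \<in> {0..Suc n}"
      then show "fps_nth (fps_const 2 * (bernoulli_fps 1 - bernoulli_fps 2)) k *
          fps_nth (fps_exp b) (Suc n - k) = ?term k / fact (Suc n)"
        by (simp add: bernoulli_fps_def binomial_fact field_simps del: fact_Suc)
    qed
    also have "\<dots> = (\<Sum>k=1..Suc n. ?term k) / fact (Suc n)"
      unfolding sum_divide_distrib by (simp add: sum.atLeast_Suc_atMost)
    also have "\<dots> = fps_nth (fps_X * euler_fps b) N"
      by (simp add: Suc euler_fps_def euler_poly_def)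
    finally show ?thesis ..
  qed
qed

lemma euler_fps_mult_exp: "euler_fps b * (fps_exp 1 + 1) = fps_const 2 * fps_exp b"
proof -
  let ?e = "fps_exp (1::real)"
  have exp_2: "fps_exp 2 = ?e * ?e"
    using fps_exp_add_mult[of "1::real" 1] by simp
  have B1: "bernoulli_fps 1 * (?e - 1) = fps_X"
    using bernoulli_fps_mult_exp[of 1] by simp
  have B2: "bernoulli_fps 2 * (fps_exp 2 - 1) = 2 * fps_X"
    using bernoulli_fps_mult_exp[of 2] by (simp add: numeral_fps_const)
  have "(bernoulli_fps 1 - bernoulli_fps 2) * (?e + 1) * (?e - 1) =
      bernoulli_fps 1 * (?e - 1) * (?e + 1) - bernoulli_fps 2 * (fps_exp 2 - 1)"
    unfolding exp_2 by (simp add: algebra_simps)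
  also have "\<dots> = fps_X * (?e - 1)"
    unfolding B1 B2 by (simp add: algebra_simps)
  finally have inverse_pair: "(bernoulli_fps 1 - bernoulli_fps 2) * (?e + 1) = fps_X"
  proof (rule mult_right_cancel[THEN iffD1, rotated])
    have "fps_nth (?e - 1) 1 \<noteq> 0" by simp
    then show "?e - 1 \<noteq> 0" by auto
  qed
  have "fps_X * (euler_fps b * (?e + 1)) =
      fps_const 2 * ((bernoulli_fps 1 - bernoulli_fps 2) * (?e + 1)) * fps_exp b"
    by (simp only: mult.assoc[symmetric] fps_X_mult_euler_fps) (simp add: mult_ac)
  also have "\<dots> = fps_X * (fps_const 2 * fps_exp b)"
    unfolding inverse_pair by (simp add: mult_ac)
  finally show ?thesis
    by simp
qed

lemma euler_poly_recurrence:
  "(\<Sum>i<n. real (n choose i) * euler_poly i b) + 2 * euler_poly n b = 2 * b ^ n"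
proof -
  have "((\<Sum>i<n. real (n choose i) * euler_poly i b) + 2 * euler_poly n b) / fact n =
      (\<Sum>i\<le>n. euler_poly i b / fact i * (1 / fact (n - i))) + euler_poly n b / fact n"
    by (simp add: lessThan_Suc_atMost[symmetric] sum_divide_distrib binomial_fact add_divide_distrib)
  also have "\<dots> = fps_nth (euler_fps b * (fps_exp 1 + 1)) n"
    by (simp add: fps_mult_nth atMost_atLeast0 euler_fps_def distrib_left sum.distrib
        if_distrib[of "\<lambda>x. _ * x"] sum.delta)
  also have "\<dots> = 2 * b ^ n / fact n"
    by (simp add: euler_fps_mult_exp)
  finally show ?thesis
    by (simp add: field_simps)
qed

lemma exp_2pi_i_eq_1_imp_Ints:
  assumes "exp (2 * of_real pi * \<i> * z) = 1"
  shows "z \<in> \<int>"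
proof -
  obtain n :: int where "Re (2 * of_real pi * \<i> * z) = 0"
      and "Im (2 * of_real pi * \<i> * z) = of_int (2 * n) * pi"
    using assms unfolding exp_eq_1 by blast
  then have "z = of_int n"
    by (simp add: complex_eq_iff)
  then show ?thesis
    by simp
qed

lemma i_minus_cot_mult:
  assumes "sin \<theta> \<noteq> 0"
  shows "(\<i> - of_real (cot \<theta>)) * (1 - exp (2 * \<i> * of_real \<theta>)) = 2 * \<i>"
proof -
  have "exp (2 * \<i> * of_real \<theta>) = cis (2 * \<theta>)"
    by (simp add: cis_conv_exp mult_ac)
  also have "\<dots> = Complex (cos \<theta> ^ 2 - sin \<theta> ^ 2) (2 * sin \<theta> * cos \<theta>)"
    by (simp add: cis.code sin_double cos_double)
  finally have exp_double: "exp (2 * \<i> * of_real \<theta>) = \<dots>" .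
  show ?thesis
    unfolding exp_double using assms
    by (simp add: complex_eq_iff cot_def field_simps cos_squared_eq)
      (use sin_cos_squared_add3[of \<theta>] in algebra)
qed

definition cot_exp :: "real \<Rightarrow> complex \<Rightarrow> complex" where
  "cot_exp \<beta> z =
     2 * \<i> * exp (2 * of_real pi * \<i> * of_real \<beta> * z) / (1 - exp (2 * of_real pi * \<i> * z))"

lemma open_unit_strip: "open {z. 0 < Re z \<and> Re z < 1}"
  using open_Int[OF open_halfspace_Re_gt[of 0] open_halfspace_Re_lt[of 1]]
  by (simp add: Collect_conj_eq)

lemma cot_exp_holomorphic: "cot_exp \<beta> holomorphic_on {z. 0 < Re z \<and> Re z < 1}"
proof -
  have "exp (2 * of_real pi * \<i> * z) \<noteq> 1" if "0 < Re z" "Re z < 1" for z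
    using exp_2pi_i_eq_1_imp_Ints that by (fastforce elim: Ints_cases)
  then show ?thesis
    unfolding cot_exp_def by (intro holomorphic_intros) auto
qed

lemma cot_exp_of_real:
  assumes "0 < x" "x < 1"
  shows "(\<i> - of_real (cot (pi * x))) * exp (2 * of_real pi * \<i> * of_real \<beta> * of_real x) =
    cot_exp \<beta> x"
proof -
  have "sin (pi * x) \<noteq> 0"
    using assms by (simp add: sin_gt_zero less_imp_neq[symmetric])
  from i_minus_cot_mult[OF this]
  have inverse:
    "(\<i> - of_real (cot (pi * x))) * (1 - exp (2 * of_real pi * \<i> * of_real x)) = 2 * \<i>"
    by (simp add: mult_ac)
  then have nonzero: "1 - exp (2 * of_real pi * \<i> * of_real x) \<noteq> 0"
    by auto
  have "cot_exp \<beta> x =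
      (\<i> - of_real (cot (pi * x))) * (1 - exp (2 * of_real pi * \<i> * of_real x)) *
      exp (2 * of_real pi * \<i> * of_real \<beta> * of_real x) /
      (1 - exp (2 * of_real pi * \<i> * of_real x))"
    unfolding cot_exp_def inverse ..
  also have "\<dots> =
      (\<i> - of_real (cot (pi * x))) * exp (2 * of_real pi * \<i> * of_real \<beta> * of_real x)"
    using nonzero by simp
  finally show ?thesis ..
qed

lemma higher_deriv_exp_linear:
  "(deriv ^^ n) (\<lambda>z. exp (a * z)) = (\<lambda>z. a ^ n * exp (a * z :: complex))"
proof (induction n)
  case (Suc n)
  have "((\<lambda>z. a ^ n * exp (a * z)) has_field_derivative a ^ Suc n * exp (a * z)) (at z)" for z
    by (auto intro!: derivative_eq_intros)
  then show ?case
    by (simp add: Suc.IH DERIV_imp_deriv fun_eq_iff del: power_Suc)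
qed simp

lemma higher_vderiv_eq_higher_deriv:
  assumes f: "f holomorphic_on S" "open S"
    and T: "open T" "of_real ` T \<subseteq> S"
    and g: "\<And>t. t \<in> T \<Longrightarrow> g t = f (of_real t)"
    and "x \<in> T"
  shows "higher_vderiv n g x = (deriv ^^ n) f (of_real x)"
  using \<open>x \<in> T\<close>
proof (induction n arbitrary: x)
  case 0
  then show ?case using g by simp
next
  case (Suc n)
  have "((deriv ^^ n) f has_field_derivative (deriv ^^ Suc n) f (of_real x)) (at (of_real x))"
    using Suc.prems T by (auto intro!: holomorphic_derivI[OF holomorphic_higher_deriv[OF f]] f)
  then have "((\<lambda>t. (deriv ^^ n) f (of_real t))
      has_vector_derivative (deriv ^^ Suc n) f (of_real x)) (at x)"
    by (rule has_vector_derivative_real_field)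
  then have "(higher_vderiv n g has_vector_derivative (deriv ^^ Suc n) f (of_real x)) (at x)"
    by (rule has_vector_derivative_transform_within_open) (use Suc T in auto)
  then show ?case
    by (simp add: vector_derivative_at)
qed

lemma cot_exp_higher_deriv_recurrence:
  "(\<Sum>i<n. of_nat (n choose i) * (deriv ^^ i) (cot_exp \<beta>) (1/2) *
       (2 * of_real pi * \<i>) ^ (n - i))
     + 2 * (deriv ^^ n) (cot_exp \<beta>) (1/2)
   = 2 * \<i> * exp (of_real pi * \<i> * of_real \<beta>) * (2 * of_real pi * \<i> * of_real \<beta>) ^ n"
proof -
  define c where "c = 2 * of_real pi * \<i>"
  define S where "S = {z. 0 < Re z \<and> Re z < 1}"
  have S: "open S" "1/2 \<in> S"
    using open_unit_strip by (auto simp: S_def)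
  have denominator_derivs:
    "(deriv ^^ j) (\<lambda>w. 1 - exp (c * w)) (1/2) = (if j = 0 then 2 else c ^ j)" for j
  proof -
    have "exp (c * (1/2)) = -1"
      by (simp add: c_def exp_pi_i')
    moreover have "(deriv ^^ j) (\<lambda>w. 1 - exp (c * w)) (1/2) =
        (deriv ^^ j) (\<lambda>w. 1) (1/2) - (deriv ^^ j) (\<lambda>w. exp (c * w)) (1/2)"
      using S by (intro higher_deriv_diff) (auto intro!: holomorphic_intros)
    ultimately show ?thesis
      by (simp add: higher_deriv_exp_linear)
  qed
  have "(\<Sum>i\<le>n. of_nat (n choose i) * (deriv ^^ i) (cot_exp \<beta>) (1/2) *
          (if n - i = 0 then 2 else c ^ (n - i)))
      = (deriv ^^ n) (\<lambda>w. cot_exp \<beta> w * (1 - exp (c * w))) (1/2)"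
    unfolding denominator_derivs[symmetric] atMost_atLeast0
    using S cot_exp_holomorphic
    by (intro higher_deriv_mult[symmetric]) (auto simp: S_def intro!: holomorphic_intros)
  also have "\<dots> = (deriv ^^ n) (\<lambda>w. 2 * \<i> * exp (c * of_real \<beta> * w)) (1/2)"
  proof (rule higher_deriv_transform_within_open[OF _ _ S])
    show "cot_exp \<beta> w * (1 - exp (c * w)) = 2 * \<i> * exp (c * of_real \<beta> * w)" if "w \<in> S" for w
    proof -
      have "exp (c * w) \<noteq> 1"
        using exp_2pi_i_eq_1_imp_Ints that by (fastforce simp: S_def c_def elim: Ints_cases)
      then show ?thesis
        by (simp add: cot_exp_def c_def mult_ac)
    qed
  qed (use cot_exp_holomorphic in \<open>auto simp: S_def intro!: holomorphic_intros\<close>)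
  also have "\<dots> = 2 * \<i> * ((c * of_real \<beta>) ^ n * exp (c * of_real \<beta> * (1/2)))"
    by (subst higher_deriv_cmult[of _ UNIV])
      (auto intro!: holomorphic_intros simp: higher_deriv_exp_linear)
  also have "\<dots> = 2 * \<i> * exp (of_real pi * \<i> * of_real \<beta>) * (c * of_real \<beta>) ^ n"
    by (simp add: c_def mult_ac)
  finally show ?thesis
    by (simp add: lessThan_Suc_atMost[symmetric] c_def mult.commute[of _ 2])
qed

lemma cot_exp_higher_deriv_half:
  "(deriv ^^ n) (cot_exp \<beta>) (1/2) =
     \<i> * exp (of_real pi * \<i> * of_real \<beta>) * (2 * of_real pi * \<i>) ^ n *
     of_real (euler_poly n \<beta>)"
proof (induction n rule: less_induct)
  case (less n)
  define c where "c = 2 * of_real pi * \<i>"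
  define K where "K = \<i> * exp (of_real pi * \<i> * of_real \<beta>)"
  define a where "a i = (deriv ^^ i) (cot_exp \<beta>) (1/2)" for i
  have recurrence:
    "(\<Sum>i<n. of_nat (n choose i) * a i * c ^ (n - i)) + 2 * a n = 2 * K * (c * of_real \<beta>) ^ n"
    using cot_exp_higher_deriv_recurrence[of n \<beta>] by (simp only: a_def c_def K_def mult.assoc)
  have sum_euler:
    "(\<Sum>i<n. real (n choose i) * euler_poly i \<beta>) = 2 * \<beta> ^ n - 2 * euler_poly n \<beta>"
    using euler_poly_recurrence[of n \<beta>] by (simp add: eq_diff_eq)
  have "(\<Sum>i<n. of_nat (n choose i) * a i * c ^ (n - i))
      = (\<Sum>i<n. K * c ^ n * of_real (real (n choose i) * euler_poly i \<beta>))"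
  proof (intro sum.cong refl)
    fix i assume "i \<in> {..<n}"
    then have "c ^ i * c ^ (n - i) = c ^ n"
      by (simp flip: power_add)
    with \<open>i \<in> {..<n}\<close> show "of_nat (n choose i) * a i * c ^ (n - i) =
        K * c ^ n * of_real (real (n choose i) * euler_poly i \<beta>)"
      by (simp add: a_def less.IH K_def c_def mult_ac)
  qed
  also have "\<dots> = K * c ^ n * of_real (\<Sum>i<n. real (n choose i) * euler_poly i \<beta>)"
    by (simp add: sum_distrib_left)
  also have "\<dots> = K * c ^ n * of_real (2 * \<beta> ^ n - 2 * euler_poly n \<beta>)"
    unfolding sum_euler ..
  finally have sum_derivs: "(\<Sum>i<n. of_nat (n choose i) * a i * c ^ (n - i)) =
      K * c ^ n * of_real (2 * \<beta> ^ n - 2 * euler_poly n \<beta>)" .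
  have "2 * a n =
      2 * K * (c * of_real \<beta>) ^ n - K * c ^ n * of_real (2 * \<beta> ^ n - 2 * euler_poly n \<beta>)"
    using recurrence unfolding sum_derivs by (simp add: eq_diff_eq add.commute)
  also have "\<dots> = 2 * (K * c ^ n * of_real (euler_poly n \<beta>))"
    by (simp add: power_mult_distrib algebra_simps)
  finally show ?case
    by (simp add: a_def K_def c_def)
qed

theorem lemma4p3:
  fixes m :: nat and \<beta> :: real
  assumes "m \<ge> 1"
  shows "F_fun m \<beta> (1/2) =
    2 ^ (m - 1) * \<i> ^ m * exp (of_nat m * pi * \<i> / 2) * complex_of_real (euler_poly (m - 1) \<beta>)"
proof -
  obtain k where m: "m = Suc k"
    using assms by (cases m) auto
  have "higher_vderiv k
          (\<lambda>t. (\<i> - complex_of_real (cot (pi * t))) * exp (2 * pi * \<i> * \<beta> * t)) (1/2)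
      = (deriv ^^ k) (cot_exp \<beta>) (of_real (1/2))"
    by (rule higher_vderiv_eq_higher_deriv[OF cot_exp_holomorphic open_unit_strip, of "{0<..<1}"])
      (auto simp: cot_exp_of_real)
  then show ?thesis
    by (simp add: F_fun_def m cot_exp_higher_deriv_half power_mult_distrib exp_add[symmetric]
        add_divide_distrib algebra_simps)
qed

end
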